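(* Let $\kappa>0$. On $\mathbb{C}^4$ with coordinates $(Z_1,Z_2,W_1,W_2)$ let $\mu_R=|Z_1|^2+|Z_2|^2-|W_1|^2-|W_2|^2-2\sqrt\kappa$ and $\mu_C=Z_1W_1+Z_2W_2$. For $(z_1,z_2)\in\mathbb{C}^2\setminus\{0\}$ and $\psi\in\mathbb{R}$ put $s=|z_1|^2+|z_2|^2$, $F=\sqrt{1+\kappa/s^2}$, $f=\sqrt{1+\kappa/s^2}+\sqrt\kappa/s$, and define the map $$Z_1=z_1e^{i\psi}f^{1/2},\quad Z_2=z_2e^{i\psi}f^{1/2},\quad W_1=-z_2e^{-i\psi}f^{-1/2},\quad W_2=z_1e^{-i\psi}f^{-1/2}.$$ Then its image lies in $\mu_R^{-1}(0)\cap\mu_C^{-1}(0)$, and the pullback of $\frac12\big(|dZ_1|^2+|dZ_2|^2+|dW_1|^2+|dW_2|^2\big)$ equals $$g+sF\big(d\psi+i(A-\bar A)\big)^2,$$ where $g=\frac1s\big(F|z_1dz_2-z_2dz_1|^2+F^{-1}|\bar z_1dz_1+\bar z_2dz_2|^2\big)$ is the Eguchi–Hanson metric and $A=\frac{\sqrt\kappa}{2s^2F}(z_1d\bar z_1+z_2d\bar z_2)$.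
   Context: For a complex $1$-form $\alpha$, $|\alpha|^2$ denotes the symmetric product $\alpha\bar\alpha$; $(\cdot)^2$ of a real $1$-form is its symmetric square. Note $A-\bar A$ is purely imaginary so $i(A-\bar A)$ is a real $1$-form. *)

theory Defs
  imports "HOL-Analysis.Analysis"
begin

text \<open>Tangent vectors of the parameter space (C^2 minus 0) x R at a point are
  elements of (complex x complex) x real; tangent vectors of C^4 are elements of
  complex x complex x complex x complex.  Complex 1-forms are real-linear maps
  from tangent vectors to complex; symmetric 2-tensors are (complex-valued)
  symmetric bilinear forms on tangent vectors.\<close>

definition sym_prod :: "('v \<Rightarrow> complex) \<Rightarrow> ('v \<Rightarrow> complex) \<Rightarrow> 'v \<Rightarrow> 'v \<Rightarrow> complex" where
  "sym_prod \<alpha> \<beta> v w = (\<alpha> v * \<beta> w + \<alpha> w * \<beta> v) / 2"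

definition cnjf :: "('v \<Rightarrow> complex) \<Rightarrow> 'v \<Rightarrow> complex" where
  "cnjf \<alpha> = (\<lambda>v. cnj (\<alpha> v))"

definition absq :: "('v \<Rightarrow> complex) \<Rightarrow> 'v \<Rightarrow> 'v \<Rightarrow> complex" where
  "absq \<alpha> = sym_prod \<alpha> (cnjf \<alpha>)"

definition sqf :: "('v \<Rightarrow> complex) \<Rightarrow> 'v \<Rightarrow> 'v \<Rightarrow> complex" where
  "sqf \<alpha> = sym_prod \<alpha> \<alpha>"

definition dz1 :: "(complex \<times> complex) \<times> real \<Rightarrow> complex" where
  "dz1 v = fst (fst v)"
definition dz2 :: "(complex \<times> complex) \<times> real \<Rightarrow> complex" where
  "dz2 v = snd (fst v)"
definition dpsi :: "(complex \<times> complex) \<times> real \<Rightarrow> complex" where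
  "dpsi v = complex_of_real (snd v)"

definition dZ1 :: "complex \<times> complex \<times> complex \<times> complex \<Rightarrow> complex" where
  "dZ1 X = fst X"
definition dZ2 :: "complex \<times> complex \<times> complex \<times> complex \<Rightarrow> complex" where
  "dZ2 X = fst (snd X)"
definition dW1 :: "complex \<times> complex \<times> complex \<times> complex \<Rightarrow> complex" where
  "dW1 X = fst (snd (snd X))"
definition dW2 :: "complex \<times> complex \<times> complex \<times> complex \<Rightarrow> complex" where
  "dW2 X = snd (snd (snd X))"

definition flat_h :: "complex \<times> complex \<times> complex \<times> complex \<Rightarrow> complex \<times> complex \<times> complex \<times> complex \<Rightarrow> complex" where
  "flat_h X Y = (absq dZ1 X Y + absq dZ2 X Y + absq dW1 X Y + absq dW2 X Y) / 2"

definition sq :: "complex \<times> complex \<Rightarrow> real" where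
  "sq z = (cmod (fst z))^2 + (cmod (snd z))^2"

definition FF :: "real \<Rightarrow> complex \<times> complex \<Rightarrow> real" where
  "FF \<kappa> z = sqrt (1 + \<kappa> / (sq z)^2)"

definition ff :: "real \<Rightarrow> complex \<times> complex \<Rightarrow> real" where
  "ff \<kappa> z = sqrt (1 + \<kappa> / (sq z)^2) + sqrt \<kappa> / sq z"

definition eh_map :: "real \<Rightarrow> (complex \<times> complex) \<times> real \<Rightarrow> complex \<times> complex \<times> complex \<times> complex" where
  "eh_map \<kappa> p = (let z1 = fst (fst p); z2 = snd (fst p); \<psi> = snd p; f = ff \<kappa> (fst p) in
     (z1 * exp (\<i> * of_real \<psi>) * of_real (sqrt f),
      z2 * exp (\<i> * of_real \<psi>) * of_real (sqrt f),
      - z2 * exp (- \<i> * of_real \<psi>) * of_real (1 / sqrt f),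
      z1 * exp (- \<i> * of_real \<psi>) * of_real (1 / sqrt f)))"

definition muR :: "real \<Rightarrow> complex \<times> complex \<times> complex \<times> complex \<Rightarrow> real" where
  "muR \<kappa> X = (cmod (dZ1 X))^2 + (cmod (dZ2 X))^2 - (cmod (dW1 X))^2 - (cmod (dW2 X))^2 - 2 * sqrt \<kappa>"

definition muC :: "complex \<times> complex \<times> complex \<times> complex \<Rightarrow> complex" where
  "muC X = dZ1 X * dW1 X + dZ2 X * dW2 X"

definition eh_metric :: "real \<Rightarrow> complex \<times> complex \<Rightarrow> (complex \<times> complex) \<times> real \<Rightarrow> (complex \<times> complex) \<times> real \<Rightarrow> complex" where
  "eh_metric \<kappa> z v w = (let z1 = fst z; z2 = snd z; s = sq z; F = FF \<kappa> z in
     of_real (1 / s) *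
       (of_real F * absq (\<lambda>u. z1 * dz2 u - z2 * dz1 u) v w
        + of_real (1 / F) * absq (\<lambda>u. cnj z1 * dz1 u + cnj z2 * dz2 u) v w))"

definition A_form :: "real \<Rightarrow> complex \<times> complex \<Rightarrow> (complex \<times> complex) \<times> real \<Rightarrow> complex" where
  "A_form \<kappa> z u = (let z1 = fst z; z2 = snd z; s = sq z; F = FF \<kappa> z in
     of_real (sqrt \<kappa> / (2 * s^2 * F)) * (z1 * cnj (dz1 u) + z2 * cnj (dz2 u)))"

end

theory Submission
  imports Defs
begin

text \<open>Write h = f^(1/2) and J (z1, z2) = (-z2, z1); the map is (z, psi) |-> (e^(i psi) h z,
  e^(-i psi) h^-1 J z). Since 1/f = F - sqrt kappa / s, the real moment map is
  s (f - 1/f) - 2 sqrt kappa = 0, and the complex one is z1 (-z2) + z2 z1 = 0. Differentiating, dZ = e^(i psi) h (dz + phi z) and dW = e^(-i psi) h^-1 J (dz - phi z), where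
  phi = i dpsi - 2 c Re <z, dz> is the logarithmic differential of e^(i psi) h and c is the
  coefficient of A. Weighting the two halves by f and 1/f gives
  F (|dz|^2 + s |phi|^2) + (sqrt kappa / s) 2 Re (phi <dz, z>), and the Lagrange identity
  |z1 dz2 - z2 dz1|^2 + |<z, dz>|^2 = s |dz|^2 rearranges this into
  g + s F (dpsi + i (A - conj A))^2.\<close>

lemma inner_mult_both: "inner (a * b) (a * c) = (cmod a)\<^sup>2 * inner b c"
  unfolding cmod_power2 inner_complex_def by (simp add: power2_eq_square algebra_simps)

lemma absq_eq_inner: "absq \<alpha> v w = of_real (inner (\<alpha> v) (\<alpha> w))"
  by (simp add: absq_def sym_prod_def cnjf_def inner_complex_def complex_eq_iff)

lemma sqf_eq_mult: "sqf \<alpha> v w = \<alpha> v * \<alpha> w"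
  by (simp add: sqf_def sym_prod_def)

lemma flat_h_eq_inner: "flat_h X Y = of_real (inner X Y / 2)"
  by (simp add: flat_h_def absq_eq_inner dZ1_def dZ2_def dW1_def dW2_def inner_prod_def)

lemma sq_eq_inner: "sq z = inner z z"
  by (simp add: sq_def inner_prod_def dot_square_norm)

lemma sq_pos: "z \<noteq> 0 \<Longrightarrow> sq z > 0"
  by (simp add: sq_eq_inner)

definition herm_prod :: "complex \<times> complex \<Rightarrow> complex \<times> complex \<Rightarrow> complex" where
  "herm_prod z x = cnj (fst z) * fst x + cnj (snd z) * snd x"

lemma Re_herm_prod: "Re (herm_prod z x) = inner z x"
  by (simp add: herm_prod_def inner_prod_def inner_complex_def)

lemma inner_wedge_add_inner_herm_prod:
  "inner (fst z * snd x - snd z * fst x) (fst z * snd y - snd z * fst y)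
     + inner (herm_prod z x) (herm_prod z y) = inner z z * inner x y"
  by (simp add: herm_prod_def inner_prod_def inner_complex_def algebra_simps)

lemma inner_add_mult_pair:
  "inner (fst x + a * fst z) (fst y + b * fst z) + inner (snd x + a * snd z) (snd y + b * snd z)
     = inner x y + inner a (herm_prod z y) + inner (herm_prod z x) b + inner z z * inner a b"
  by (simp add: herm_prod_def inner_prod_def inner_complex_def algebra_simps)

lemma ff_eq_FF_add: "ff k z = FF k z + sqrt k / sq z"
  by (simp add: ff_def FF_def)

lemma FF_pos: "k \<ge> 0 \<Longrightarrow> FF k z > 0"
  by (simp add: FF_def add_pos_nonneg)

lemma ff_pos: "k \<ge> 0 \<Longrightarrow> ff k z > 0"
  by (simp add: ff_eq_FF_add FF_pos add_pos_nonneg sq_eq_inner)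

lemma FF_squared: "k \<ge> 0 \<Longrightarrow> (FF k z)\<^sup>2 = 1 + (sqrt k / sq z)\<^sup>2"
  by (simp add: FF_def add_nonneg_nonneg power_divide)

lemma one_div_ff:
  assumes "k \<ge> 0"
  shows "1 / ff k z = FF k z - sqrt k / sq z"
proof -
  have "ff k z * (FF k z - sqrt k / sq z) = 1"
    using assms by (simp add: ff_eq_FF_add FF_squared algebra_simps flip: power2_eq_square)
  moreover have "ff k z \<noteq> 0"
    using ff_pos[OF assms] by (metis less_irrefl)
  ultimately show ?thesis
    by (simp add: divide_eq_eq mult.commute)
qed

text \<open>The coefficient c in A = c (z1 d(conj z1) + z2 d(conj z2)); it is also minus the
  logarithmic derivative of f^(1/2) with respect to s.\<close>
definition eh_coeff :: "real \<Rightarrow> real \<Rightarrow> real" where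
  "eh_coeff k s = sqrt k / (2 * s\<^sup>2 * sqrt (1 + k / s\<^sup>2))"

lemma eh_coeff_eq:
  "k \<ge> 0 \<Longrightarrow> sq z > 0 \<Longrightarrow> eh_coeff k (sq z) = sqrt k / sq z / (2 * sq z * FF k z)"
  by (simp add: eh_coeff_def FF_def field_simps power2_eq_square)

lemma sqrt_profile_has_real_derivative:
  assumes "k > 0" "s > 0"
  shows "((\<lambda>s. sqrt (sqrt (1 + k / s\<^sup>2) + sqrt k / s)) has_real_derivative
           - eh_coeff k s * sqrt (sqrt (1 + k / s\<^sup>2) + sqrt k / s)) (at s)"
proof -
  define F where "F = sqrt (1 + k / s\<^sup>2)"
  define q where "q = sqrt k / s"
  have F: "F > 0" "F\<^sup>2 = 1 + q\<^sup>2"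
    using assms by (auto simp: F_def q_def add_pos_nonneg power_divide)
  have f: "F + q > 0"
    using assms F by (intro add_pos_pos) (simp_all add: q_def)
  have "k + s * s > 0"
    using assms by (simp add: add_pos_pos)
  have "((\<lambda>s. sqrt (sqrt (1 + k / s\<^sup>2) + sqrt k / s)) has_real_derivative
      (- k / (s^3 * F) - sqrt k / s\<^sup>2) / (2 * sqrt (F + q))) (at s)"
    using assms f \<open>k + s * s > 0\<close> unfolding F_def q_def
    by (auto intro!: derivative_eq_intros simp: field_simps power2_eq_square power3_eq_cube)
  moreover have "(- k / (s^3 * F) - sqrt k / s\<^sup>2) / (2 * sqrt (F + q))
      = - eh_coeff k s * sqrt (F + q)"
  proof -
    have c: "eh_coeff k s = sqrt k / (2 * s\<^sup>2 * F)"
      by (simp add: eh_coeff_def F_def)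
    have "- k / (s^3 * F) - sqrt k / s\<^sup>2 = - 2 * eh_coeff k s * (F + q)"
      unfolding c q_def using assms F by (simp add: field_simps power2_eq_square power3_eq_cube)
    then show ?thesis
      using f by (simp add: field_simps)
  qed
  ultimately show ?thesis
    by (simp add: F_def q_def)
qed

lemma sq_has_derivative: "(sq has_derivative (\<lambda>v. 2 * inner z v)) (at z)"
  unfolding sq_eq_inner[abs_def] by (auto intro!: derivative_eq_intros simp: inner_commute)

lemma sqrt_ff_has_derivative:
  assumes "k > 0" "z \<noteq> 0"
  shows "((\<lambda>z. sqrt (ff k z)) has_derivative
           (\<lambda>v. - 2 * eh_coeff k (sq z) * sqrt (ff k z) * inner z v)) (at z)"
  using DERIV_compose_FDERIV[OF sqrt_profile_has_real_derivative[OF assms(1) sq_pos[OF assms(2)]]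
      sq_has_derivative]
  by (simp add: ff_def mult_ac)

lemma sqrt_ff_fst_has_derivative:
  assumes "k > 0" "fst p \<noteq> 0"
  shows "((\<lambda>p. sqrt (ff k (fst p))) has_derivative
           (\<lambda>v. - 2 * eh_coeff k (sq (fst p)) * sqrt (ff k (fst p)) * inner (fst p) (fst v))) (at p)"
  using has_derivative_compose[OF has_derivative_fst[OF has_derivative_ident]
      sqrt_ff_has_derivative[OF assms]] by simp

lemma has_derivative_cexp:
  assumes "(f has_derivative f') (at x within S)"
  shows "((\<lambda>x. exp (f x :: complex)) has_derivative (\<lambda>h. exp (f x) * f' h)) (at x within S)"
  using has_derivative_compose[OF assms DERIV_exp[unfolded has_field_derivative_def]] .

definition eh_phase ::
    "real \<Rightarrow> complex \<times> complex \<Rightarrow> (complex \<times> complex) \<times> real \<Rightarrow> complex" where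
  "eh_phase k z v = \<i> * dpsi v - of_real (2 * eh_coeff k (sq z) * inner z (fst v))"

lemma eh_factor_has_derivative:
  assumes "k > 0" "fst p \<noteq> 0"
  shows "((\<lambda>p. exp (\<i> * of_real (snd p)) * of_real (sqrt (ff k (fst p)))) has_derivative
           (\<lambda>v. exp (\<i> * of_real (snd p)) * of_real (sqrt (ff k (fst p))) * eh_phase k (fst p) v))
         (at p)"
  apply (rule has_derivative_eq_rhs)
   apply (rule sqrt_ff_fst_has_derivative[OF assms] has_derivative_cexp derivative_eq_intros refl)+
  using ff_pos[of k "fst p"] assms(1) by (auto simp: eh_phase_def dpsi_def field_simps)

lemma eh_cofactor_has_derivative:
  assumes "k > 0" "fst p \<noteq> 0"
  shows "((\<lambda>p. exp (- \<i> * of_real (snd p)) * of_real (1 / sqrt (ff k (fst p)))) has_derivative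
           (\<lambda>v. - (exp (- \<i> * of_real (snd p)) * of_real (1 / sqrt (ff k (fst p))))
                  * eh_phase k (fst p) v)) (at p)"
  apply (rule has_derivative_eq_rhs)
   apply (rule sqrt_ff_fst_has_derivative[OF assms] has_derivative_cexp derivative_eq_intros refl)+
  using ff_pos[of k "fst p"] assms(1) by (auto simp: eh_phase_def dpsi_def field_simps)

definition eh_map_deriv ::
    "real \<Rightarrow> (complex \<times> complex) \<times> real \<Rightarrow> (complex \<times> complex) \<times> real
      \<Rightarrow> complex \<times> complex \<times> complex \<times> complex" where
  "eh_map_deriv k p v =
    (let z = fst p; \<phi> = eh_phase k z v;
         a = exp (\<i> * of_real (snd p)) * of_real (sqrt (ff k z));
         b = exp (- \<i> * of_real (snd p)) * of_real (1 / sqrt (ff k z))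
     in (a * (dz1 v + \<phi> * fst z), a * (dz2 v + \<phi> * snd z),
         - b * (dz2 v - \<phi> * snd z), b * (dz1 v - \<phi> * fst z)))"

lemma eh_map_has_derivative:
  assumes "k > 0" "fst p \<noteq> 0"
  shows "(eh_map k has_derivative eh_map_deriv k p) (at p)"
proof -
  define a where "a p = exp (\<i> * of_real (snd p)) * of_real (sqrt (ff k (fst p)))" for p
  define b where "b p = exp (- \<i> * of_real (snd p)) * of_real (1 / sqrt (ff k (fst p)))" for p
  have "eh_map k
      = (\<lambda>p. (fst (fst p) * a p, snd (fst p) * a p, - snd (fst p) * b p, fst (fst p) * b p))"
    by (auto simp: eh_map_def a_def b_def Let_def)
  moreover have "(a has_derivative (\<lambda>v. a p * eh_phase k (fst p) v)) (at p)"
    unfolding a_def by (rule eh_factor_has_derivative[OF assms])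
  moreover have "(b has_derivative (\<lambda>v. - b p * eh_phase k (fst p) v)) (at p)"
    unfolding b_def by (rule eh_cofactor_has_derivative[OF assms])
  ultimately show ?thesis
    apply (elim ssubst)
    apply (rule has_derivative_eq_rhs)
     apply (rule derivative_eq_intros refl | assumption)+
    by (auto simp: eh_map_deriv_def a_def b_def Let_def dz1_def dz2_def algebra_simps)
qed

lemma muR_eh_map:
  assumes "k \<ge> 0" "z \<noteq> 0"
  shows "muR k (eh_map k (z, \<psi>)) = 0"
proof -
  have "(sqrt (ff k z))\<^sup>2 = ff k z"
    using ff_pos[OF assms(1)] by (simp add: less_imp_le)
  then have "muR k (eh_map k (z, \<psi>)) = sq z * (ff k z - 1 / ff k z) - 2 * sqrt k"
    using norm_exp_i_times[of \<psi>] norm_exp_i_times[of "- \<psi>"]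
    by (simp add: muR_def eh_map_def Let_def dZ1_def dZ2_def dW1_def dW2_def sq_def
        norm_mult norm_divide power_mult_distrib power_divide algebra_simps)
  also have "\<dots> = 0"
    unfolding one_div_ff[OF assms(1)] unfolding ff_eq_FF_add using sq_pos[OF assms(2)] by simp
  finally show ?thesis .
qed

lemma muC_eh_map: "muC (eh_map k p) = 0"
  by (simp add: muC_def eh_map_def Let_def dZ1_def dZ2_def dW1_def dW2_def algebra_simps)

lemma eh_metric_eq_inner:
  assumes "z \<noteq> 0"
  shows "eh_metric k z v w = of_real (FF k z * inner (fst v) (fst w)
           + (1 / FF k z - FF k z) / sq z * inner (herm_prod z (fst v)) (herm_prod z (fst w)))"
proof -
  define \<omega> where "\<omega> x = fst z * snd x - snd z * fst x" for x :: "complex \<times> complex"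
  have "eh_metric k z v w = of_real ((FF k z * inner (\<omega> (fst v)) (\<omega> (fst w))
           + inner (herm_prod z (fst v)) (herm_prod z (fst w)) / FF k z) / sq z)"
    by (simp add: eh_metric_def Let_def absq_eq_inner \<omega>_def herm_prod_def dz1_def dz2_def
        field_simps)
  moreover have "inner (\<omega> (fst v)) (\<omega> (fst w))
      = sq z * inner (fst v) (fst w) - inner (herm_prod z (fst v)) (herm_prod z (fst w))"
    using inner_wedge_add_inner_herm_prod[of z "fst v" "fst w"] by (simp add: \<omega>_def sq_eq_inner)
  ultimately show ?thesis
    using sq_pos[OF assms] by (simp add: field_simps)
qed

lemma flat_h_eh_map_deriv:
  fixes z :: "complex \<times> complex" and v w :: "(complex \<times> complex) \<times> real"
  assumes "k \<ge> 0"
  defines "\<phi> \<equiv> eh_phase k z v" and "\<phi>' \<equiv> eh_phase k z w"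
  shows "flat_h (eh_map_deriv k (z, \<psi>) v) (eh_map_deriv k (z, \<psi>) w)
    = of_real (FF k z * (inner (fst v) (fst w) + sq z * inner \<phi> \<phi>')
        + sqrt k / sq z * (inner \<phi> (herm_prod z (fst w)) + inner (herm_prod z (fst v)) \<phi>'))"
proof -
  define f where "f = ff k z"
  define a where "a = exp (\<i> * of_real \<psi>) * of_real (sqrt f)"
  define b where "b = exp (- \<i> * of_real \<psi>) * of_real (1 / sqrt f)"
  define V where "V = inner (fst v) (fst w)"
  define X where "X = inner \<phi> (herm_prod z (fst w)) + inner (herm_prod z (fst v)) \<phi>'"
  define P where "P = sq z * inner \<phi> \<phi>'"
  have "f > 0"
    using ff_pos[OF \<open>k \<ge> 0\<close>] by (simp add: f_def)
  then have ab: "(cmod a)\<^sup>2 = f" "(cmod b)\<^sup>2 = 1 / f"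
    using norm_exp_i_times[of \<psi>] norm_exp_i_times[of "- \<psi>"]
    by (simp_all add: a_def b_def norm_mult norm_divide power_divide)
  have D: "eh_map_deriv k (z, \<psi>) u = (a * (fst (fst u) + eh_phase k z u * fst z),
      a * (snd (fst u) + eh_phase k z u * snd z), (- b) * (snd (fst u) - eh_phase k z u * snd z),
      b * (fst (fst u) - eh_phase k z u * fst z))" for u
    by (simp add: eh_map_deriv_def Let_def a_def b_def f_def dz1_def dz2_def)
  have "inner (eh_map_deriv k (z, \<psi>) v) (eh_map_deriv k (z, \<psi>) w)
      = f * (inner (fst (fst v) + \<phi> * fst z) (fst (fst w) + \<phi>' * fst z)
               + inner (snd (fst v) + \<phi> * snd z) (snd (fst w) + \<phi>' * snd z))
        + 1 / f * (inner (fst (fst v) - \<phi> * fst z) (fst (fst w) - \<phi>' * fst z)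
               + inner (snd (fst v) - \<phi> * snd z) (snd (fst w) - \<phi>' * snd z))"
    unfolding D inner_Pair inner_mult_both norm_minus_cancel ab \<phi>_def \<phi>'_def
    by (simp add: algebra_simps)
  also have "\<dots> = f * (V + X + P) + 1 / f * (V - X + P)"
    using inner_add_mult_pair[of "fst v" \<phi> z "fst w" \<phi>']
      inner_add_mult_pair[of "fst v" "- \<phi>" z "fst w" "- \<phi>'"]
    by (simp add: V_def X_def P_def sq_eq_inner diff_diff_eq add.assoc)
  also have "\<dots> = 2 * (FF k z * (V + P) + sqrt k / sq z * X)"
    unfolding f_def one_div_ff[OF \<open>k \<ge> 0\<close>] unfolding ff_eq_FF_add by algebra
  finally show ?thesis
    by (simp add: flat_h_eq_inner V_def X_def P_def)
qed

lemma A_form_eq: "A_form k z u = of_real (eh_coeff k (sq z)) * cnj (herm_prod z (fst u))"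
  by (simp add: A_form_def Let_def eh_coeff_def FF_def herm_prod_def dz1_def dz2_def mult_ac)

lemma i_A_form_diff:
  "\<i> * (A_form k z u - cnj (A_form k z u))
     = of_real (2 * eh_coeff k (sq z) * Im (herm_prod z (fst u)))"
  by (simp add: A_form_eq complex_eq_iff)

lemma flat_h_pullback_eh_map:
  assumes "k > 0" "z \<noteq> 0"
  shows "flat_h (eh_map_deriv k (z, \<psi>) v) (eh_map_deriv k (z, \<psi>) w)
    = eh_metric k z v w
      + of_real (sq z * FF k z) * sqf (\<lambda>u. dpsi u + \<i> * (A_form k z u - cnj (A_form k z u))) v w"
proof -
  define s where "s = sq z"
  define F where "F = FF k z"
  define q where "q = sqrt k / s"
  define c where "c = eh_coeff k s"
  have "s > 0" "F > 0"
    using sq_pos[OF assms(2)] FF_pos assms(1) by (simp_all add: s_def F_def)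
  have q: "q = 2 * c * s * F"
    using \<open>s > 0\<close> \<open>F > 0\<close> eh_coeff_eq[of k z] assms(1)
    by (simp add: q_def c_def s_def F_def)
  have "F\<^sup>2 = 1 + q\<^sup>2"
    using FF_squared assms(1) by (simp add: F_def q_def s_def)
  then have coeff: "(1 / F - F) / s = - 2 * q * c"
    using \<open>s > 0\<close> \<open>F > 0\<close> unfolding q by (simp add: field_simps power2_eq_square)
  have phase:
    "eh_phase k z u = \<i> * of_real (snd u) - of_real (2 * c * Re (herm_prod z (fst u)))" for u
    by (simp add: eh_phase_def dpsi_def Re_herm_prod c_def s_def)
  have sqf: "sqf (\<lambda>u. dpsi u + \<i> * (A_form k z u - cnj (A_form k z u))) v w
      = of_real ((snd v + 2 * c * Im (herm_prod z (fst v)))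
                 * (snd w + 2 * c * Im (herm_prod z (fst w))))"
    by (simp add: sqf_eq_mult i_A_form_diff dpsi_def c_def s_def)
  show ?thesis
    unfolding flat_h_eh_map_deriv[OF less_imp_le[OF assms(1)]] eh_metric_eq_inner[OF assms(2)]
      sqf phase
    by (simp add: F_def[symmetric] s_def[symmetric] q_def[symmetric] coeff inner_complex_def)
      (simp add: q algebra_simps)
qed

theorem mainTheorem4:
  fixes \<kappa> :: real and z1 z2 :: complex and \<psi> :: real
  assumes "\<kappa> > 0" and "(z1, z2) \<noteq> (0, 0)"
  shows "muR \<kappa> (eh_map \<kappa> ((z1, z2), \<psi>)) = 0
    \<and> muC (eh_map \<kappa> ((z1, z2), \<psi>)) = 0
    \<and> (\<exists>D. (eh_map \<kappa> has_derivative D) (at ((z1, z2), \<psi>))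
         \<and> (\<forall>v w. flat_h (D v) (D w) =
              eh_metric \<kappa> (z1, z2) v w
              + of_real (sq (z1, z2) * FF \<kappa> (z1, z2)) *
                sqf (\<lambda>u. dpsi u + \<i> * (A_form \<kappa> (z1, z2) u - cnj (A_form \<kappa> (z1, z2) u))) v w))"
proof -
  have z: "(z1, z2) \<noteq> 0"
    using assms(2) by (simp add: zero_prod_def)
  have "(eh_map \<kappa> has_derivative eh_map_deriv \<kappa> ((z1, z2), \<psi>)) (at ((z1, z2), \<psi>))"
    using eh_map_has_derivative[OF assms(1)] z by simp
  then show ?thesis
    using muR_eh_map[OF less_imp_le[OF assms(1)] z] muC_eh_map
      flat_h_pullback_eh_map[OF assms(1) z] by blast
qed

end
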